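(* Let $z=(z_1,\ldots,z_n)\in\mathbb{R}^n$, let $\mathcal{I}=\{i : z_i>0\}$, and let $f_z(a)=\sum_{i=1}^n |z_i-a_i|$ for $a\in\mathbb{R}^n$. Let $d\in DS_n$ be a minimizer of $f_z$ over $DS_n$ such that $d_j>0$ for at least one $j\notin\mathcal{I}$. Then there exists $d^*\in DS_n$ with $d^*_i=0$ for all $i\notin\mathcal{I}$ and $f_z(d^* )=f_z(d)$.
   Context: All graphs are simple (no loops, no multiple edges) on the vertex set $\{1,\ldots,n\}$. The degree sequence of such a graph is the vector $(d_1,\ldots,d_n)$ where $d_i$ is the number of neighbours of vertex $i$. $DS_n$ denotes the set of all degree sequences of simple graphs on $\{1,\ldots,n\}$. *)

theory Defs
  imports Complex_Main
begin

definition simple_graph_on :: "nat \<Rightarrow> (nat \<Rightarrow> nat \<Rightarrow> bool) \<Rightarrow> bool" where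
  "simple_graph_on n E \<longleftrightarrow>
     (\<forall>i j. E i j \<longrightarrow> E j i) \<and> (\<forall>i. \<not> E i i) \<and>
     (\<forall>i j. E i j \<longrightarrow> i \<in> {1..n} \<and> j \<in> {1..n})"

definition degseq :: "nat \<Rightarrow> (nat \<Rightarrow> nat \<Rightarrow> bool) \<Rightarrow> nat \<Rightarrow> nat" where
  "degseq n E = (\<lambda>i. if i \<in> {1..n} then card {j \<in> {1..n}. E i j} else 0)"

definition DS :: "nat \<Rightarrow> (nat \<Rightarrow> nat) set" where
  "DS n = {degseq n E | E. simple_graph_on n E}"

definition fz :: "nat \<Rightarrow> (nat \<Rightarrow> real) \<Rightarrow> (nat \<Rightarrow> nat) \<Rightarrow> real" where
  "fz n z a = (\<Sum>i=1..n. \<bar>z i - real (a i)\<bar>)"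

end

theory Submission
  imports Defs
begin

text \<open>Delete every edge that leaves the set of vertices with \<open>z\<^sub>i > 0\<close>. A vertex
  with \<open>z\<^sub>i \<le> 0\<close> then gets degree 0, which lowers its term \<open>\<bar>z\<^sub>i - d\<^sub>i\<bar> = d\<^sub>i - z\<^sub>i\<close>
  by its full degree; a vertex with \<open>z\<^sub>i > 0\<close> loses one unit of degree per deleted
  edge at it, which raises its term by at most that amount. Every deleted edge has
  exactly one end on each side, so the total gain is at least the total loss and
  \<open>f\<^sub>z\<close> does not increase. Minimality of \<open>d\<close> forces equality.\<close>

definition induced_subgraph :: "(nat \<Rightarrow> nat \<Rightarrow> bool) \<Rightarrow> (nat \<Rightarrow> bool) \<Rightarrow> nat \<Rightarrow> nat \<Rightarrow> bool" where
  "induced_subgraph E P = (\<lambda>i j. E i j \<and> P i \<and> P j)"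

lemma simple_graph_on_induced_subgraph:
  "simple_graph_on n E \<Longrightarrow> simple_graph_on n (induced_subgraph E P)"
  unfolding simple_graph_on_def induced_subgraph_def by blast

lemma degseq_induced_subgraph_outside:
  "\<not> P i \<Longrightarrow> degseq n (induced_subgraph E P) i = 0"
  by (simp add: degseq_def induced_subgraph_def)

lemma degseq_induced_subgraph_inside:
  assumes "i \<in> {1..n}" and "P i"
  shows "degseq n E i = degseq n (induced_subgraph E P) i + card {j \<in> {1..n}. E i j \<and> \<not> P j}"
proof -
  have "{j \<in> {1..n}. E i j} = {j \<in> {1..n}. induced_subgraph E P i j} \<union> {j \<in> {1..n}. E i j \<and> \<not> P j}"
    using assms(2) by (auto simp: induced_subgraph_def)
  then have "card {j \<in> {1..n}. E i j}
      = card {j \<in> {1..n}. induced_subgraph E P i j} + card {j \<in> {1..n}. E i j \<and> \<not> P j}"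
    by (simp add: card_Un_disjoint disjoint_iff induced_subgraph_def)
  then show ?thesis
    using assms(1) unfolding degseq_def by (simp only: if_True)
qed

lemma sum_card_related_swap:
  assumes "\<And>i j. E i j \<Longrightarrow> E j i" and "finite A" and "finite B"
  shows "(\<Sum>i\<in>A. card {j \<in> B. E i j}) = (\<Sum>j\<in>B. card {i \<in> A. E j i})"
proof -
  have E_sym: "E i j = E j i" for i j
    using assms(1) by blast
  have "(\<Sum>i\<in>A. card {j \<in> B. E i j}) = (\<Sum>i\<in>A. \<Sum>j\<in>B. if E i j then 1 else 0)"
    using assms(3) by (intro sum.cong refl) (simp only: card_eq_sum sum.inter_filter)
  also have "\<dots> = (\<Sum>j\<in>B. \<Sum>i\<in>A. if E j i then 1 else 0)"
    by (subst sum.swap) (simp only: E_sym)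
  also have "\<dots> = (\<Sum>j\<in>B. card {i \<in> A. E j i})"
    using assms(2) by (intro sum.cong refl) (simp only: card_eq_sum sum.inter_filter)
  finally show ?thesis .
qed

lemma fz_degseq_induced_subgraph_le:
  assumes "simple_graph_on n E" and nonpos: "\<And>i. \<not> P i \<Longrightarrow> z i \<le> 0"
  shows "fz n z (degseq n (induced_subgraph E P)) \<le> fz n z (degseq n E)"
proof -
  define V where "V = {1..n}"
  define d where "d = degseq n E"
  define d' where "d' = degseq n (induced_subgraph E P)"
  define cut where "cut i = card {j \<in> V. E i j \<and> \<not> P j}" for i
  define gain where "gain i = (if P i then 0 else d i)" for i
  define loss where "loss i = (if P i then cut i else 0)" for i
  have E_sym: "E i j \<Longrightarrow> E j i" for i j
    using assms(1) unfolding simple_graph_on_def by blast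
  have term_le: "\<bar>z i - real (d' i)\<bar> \<le> \<bar>z i - real (d i)\<bar> + real (loss i) - real (gain i)"
    if "i \<in> V" for i
  proof (cases "P i")
    case True
    have "d i = d' i + cut i"
      using degseq_induced_subgraph_inside[of i n P E] that True
      unfolding d_def d'_def cut_def V_def by blast
    then show ?thesis using True by (simp add: loss_def gain_def)
  next
    case False
    then have "d' i = 0"
      by (simp add: d'_def degseq_induced_subgraph_outside)
    then show ?thesis
      using False nonpos[OF False] by (simp add: loss_def gain_def)
  qed
  have "(\<Sum>i\<in>V. loss i) = (\<Sum>i \<in> {i \<in> V. P i}. cut i)"
    unfolding loss_def by (rule sum.inter_filter[symmetric]) (simp add: V_def)
  also have "\<dots> = (\<Sum>i \<in> {i \<in> V. P i}. card {j \<in> {j \<in> V. \<not> P j}. E i j})"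
    unfolding cut_def by (intro sum.cong refl arg_cong[where f = card]) auto
  also have "\<dots> = (\<Sum>j \<in> {j \<in> V. \<not> P j}. card {i \<in> {i \<in> V. P i}. E j i})"
    using E_sym by (intro sum_card_related_swap) (auto simp: V_def)
  also have "\<dots> \<le> (\<Sum>j \<in> {j \<in> V. \<not> P j}. card {i \<in> V. E j i})"
    by (intro sum_mono card_mono) (auto simp: V_def)
  also have "\<dots> = (\<Sum>j \<in> {j \<in> V. \<not> P j}. d j)"
    by (intro sum.cong) (auto simp: V_def d_def degseq_def)
  also have "\<dots> = (\<Sum>i\<in>V. gain i)"
    unfolding gain_def by (subst sum.inter_filter) (auto simp: V_def intro: sum.cong)
  finally have loss_le_gain: "(\<Sum>i\<in>V. real (loss i)) \<le> (\<Sum>i\<in>V. real (gain i))"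
    by (simp flip: of_nat_sum)
  have "fz n z d' \<le> (\<Sum>i\<in>V. \<bar>z i - real (d i)\<bar> + real (loss i) - real (gain i))"
    unfolding fz_def V_def[symmetric] by (intro sum_mono term_le)
  also have "\<dots> = fz n z d + (\<Sum>i\<in>V. real (loss i)) - (\<Sum>i\<in>V. real (gain i))"
    unfolding fz_def V_def[symmetric] by (simp add: sum.distrib sum_subtractf)
  finally show ?thesis
    using loss_le_gain unfolding d_def d'_def by linarith
qed

theorem lemma4:
  fixes n :: nat and z :: "nat \<Rightarrow> real" and d :: "nat \<Rightarrow> nat"
  assumes "d \<in> DS n"
    and "\<forall>a \<in> DS n. fz n z d \<le> fz n z a"
    and "\<exists>j \<in> {1..n}. \<not> (z j > 0) \<and> d j > 0"
  shows "\<exists>d' \<in> DS n. (\<forall>i \<in> {1..n}. \<not> (z i > 0) \<longrightarrow> d' i = 0) \<and> fz n z d' = fz n z d"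
proof -
  obtain E where E: "simple_graph_on n E" and d: "d = degseq n E"
    using assms(1) unfolding DS_def by blast
  define d' where "d' = degseq n (induced_subgraph E (\<lambda>i. z i > 0))"
  have d'_in_DS: "d' \<in> DS n"
    unfolding DS_def d'_def using simple_graph_on_induced_subgraph[OF E] by blast
  moreover have "\<forall>i \<in> {1..n}. \<not> (z i > 0) \<longrightarrow> d' i = 0"
    by (simp add: d'_def degseq_induced_subgraph_outside)
  moreover have "fz n z d' = fz n z d"
  proof (rule antisym)
    show "fz n z d' \<le> fz n z d"
      unfolding d d'_def by (rule fz_degseq_induced_subgraph_le[OF E]) simp
    show "fz n z d \<le> fz n z d'"
      using assms(2) d'_in_DS by blast
  qed
  ultimately show ?thesis
    by blast
qed

end
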